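(* Fix $\delta\in(0,1)$. Let $t\ge1$ and integers $l_1,\dots,l_t$, and consider unit vectors $\mathbf a_{i,j}\in\mathbb R^m$, $i\in\{1,\dots,t\}$, $j\in\{1,\dots,l_i\}$, in general position, such that $\sum_{j}\mathbf a_{i,j}=0$ for each $i$, and $\mathbf a_{i,j}\perp\mathbf a_{i',j'}$ whenever $i\ne i'$. Let unit vectors $\mathbf v_1,\dots,\mathbf v_t\in\mathbb R^m$ be orthogonal to each other and to all $\mathbf a_{i,j}$. Then there are positive scalars $\alpha_i,\beta_i$, $i\in\{1,\dots,t\}$, such that the matrix $\mathbf A$ whose columns are the vectors $\alpha_i\mathbf a_{i,j}+\beta_i\mathbf v_i$ over all $i,j$ satisfies, for each $i\in\{1,\dots,t\}$, \[ \min_{|S|=k_i}\frac{\mathrm{Er}_{\mathbf A}(S)}{\mathrm{OPT}_{k_i}}\ge(1-\delta)\,l_i,\qquad\text{where }k_i=l_1+\dots+l_i-1. \]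
   Context: For a matrix $\mathbf A$ with $n$ columns $\mathbf a_1,\dots,\mathbf a_n$ and $S\subseteq\{1,\dots,n\}$, $\mathbf P_S$ is the orthogonal projection onto $\mathrm{span}\{\mathbf a_i:i\in S\}$, $\mathrm{Er}_{\mathbf A}(S)=\|\mathbf A-\mathbf P_S\mathbf A\|_F^2$, and $\mathrm{OPT}_k=\min_{\mathrm{rank}(\mathbf B)=k}\|\mathbf A-\mathbf B\|_F^2$. The minimum is over column index subsets $S$ of size $k_i$. *)

theory Defs
  imports "HOL-Analysis.Analysis"
begin

definition orth_proj :: "('a::real_inner) set \<Rightarrow> 'a \<Rightarrow> 'a" where
  "orth_proj W x = (THE y. y \<in> W \<and> (\<forall>w\<in>W. (x - y) \<bullet> w = 0))"

text \<open>A matrix is given by its columns: a map col from a finite column index set C to vectors.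
  Er_A(S) = squared Frobenius norm of A - P_S A, where P_S projects onto the span of the columns in S.\<close>
definition Er :: "('i \<Rightarrow> 'a::real_inner) \<Rightarrow> 'i set \<Rightarrow> 'i set \<Rightarrow> real" where
  "Er col C S = (\<Sum>c\<in>C. (norm (col c - orth_proj (span (col ` S)) (col c)))\<^sup>2)"

definition OPT :: "('i \<Rightarrow> 'a::euclidean_space) \<Rightarrow> 'i set \<Rightarrow> nat \<Rightarrow> real" where
  "OPT col C k = Inf {(\<Sum>c\<in>C. (norm (col c - B c))\<^sup>2) | B. dim (span (B ` C)) = k}"

end

(*
  Take alpha_i = gamma * r^i and beta_i = r^i with gamma large and r small.  A set S of
  k_i = l_1 + ... + l_i - 1 columns misses some column (i', j) with i' <= i.  The blocks are
  mutually orthogonal, so the residual of that column is at least its distance to the other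
  columns of block i'; as the a_(i',j) sum to zero, this distance is l_i' * beta_i' times the
  distance from v_i' to the span of the tilted vectors gamma * a_(i',j) + v_i', which is close
  to 1 for large gamma.  Hence Er(S) is nearly (l_i' * beta_i')^2 >= (l_i * beta_i)^2.
  Conversely, keeping the blocks before i, dropping the v-component of block i and deleting
  the later blocks gives a matrix of rank k_i whose error is l_i * beta_i^2 + O(r^2 * beta_i^2),
  while OPT is positive because the columns are linearly independent.
*)
theory Submission
  imports Defs
begin

(* Linear independence of an indexed family: unlike independent (f ` I), it also excludes
   repeated vectors. *)
definition indep_family :: "('i \<Rightarrow> 'a::real_vector) \<Rightarrow> 'i set \<Rightarrow> bool" where
  "indep_family f I \<longleftrightarrow> (\<forall>c. (\<Sum>x\<in>I. c x *\<^sub>R f x) = 0 \<longrightarrow> (\<forall>x\<in>I. c x = 0))"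

lemma indep_familyD:
  "indep_family f I \<Longrightarrow> (\<Sum>x\<in>I. c x *\<^sub>R f x) = 0 \<Longrightarrow> x \<in> I \<Longrightarrow> c x = 0"
  unfolding indep_family_def by blast

lemma indep_family_inj_on:
  assumes "finite I" "indep_family f I"
  shows "inj_on f I"
proof (rule inj_onI, rule ccontr)
  fix x y assume xy: "x \<in> I" "y \<in> I" "f x = f y" "x \<noteq> y"
  define c where "c = (\<lambda>z. if z = x then 1 else if z = y then -1 else 0 :: real)"
  have "(\<Sum>z\<in>I. c z *\<^sub>R f z) = f x - f y"
    using xy assms(1) by (simp add: c_def if_distrib[of "\<lambda>r. r *\<^sub>R _"] sum.If_cases Int_absorb1)
  then have "c x = 0" using indep_familyD[OF assms(2) _ xy(1)] xy(3) by simp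
  then show False by (simp add: c_def)
qed

lemma indep_family_independent:
  assumes "finite I" "indep_family f I"
  shows "independent (f ` I)"
proof (rule independent_if_scalars_zero)
  show "finite (f ` I)" using assms(1) by simp
next
  fix u w assume sum0: "(\<Sum>y\<in>f ` I. u y *\<^sub>R y) = 0" and "w \<in> f ` I"
  then obtain x where x: "x \<in> I" "w = f x" by blast
  have "(\<Sum>z\<in>I. u (f z) *\<^sub>R f z) = 0"
    using sum0 sum.reindex[OF indep_family_inj_on[OF assms], of "\<lambda>y. u y *\<^sub>R y"] by simp
  then have "u (f x) = 0" by (rule indep_familyD[OF assms(2) _ x(1)])
  then show "u w = 0" using x(2) by simp
qed

lemma dim_span_indep_family:
  assumes "finite I" "indep_family f I"
  shows "dim (span (f ` I)) = card I"
  using dim_span_eq_card_independent[OF indep_family_independent[OF assms]]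
    card_image[OF indep_family_inj_on[OF assms]] by simp

lemma indep_family_scaleR:
  assumes "r \<noteq> 0" "indep_family f I"
  shows "indep_family (\<lambda>x. r *\<^sub>R f x) I"
  unfolding indep_family_def
proof (intro allI impI ballI)
  fix c x assume "(\<Sum>x\<in>I. c x *\<^sub>R r *\<^sub>R f x) = 0" "x \<in> I"
  then have "c x * r = 0" using indep_familyD[OF assms(2), of "\<lambda>x. c x * r"] by simp
  then show "c x = 0" using assms(1) by simp
qed

lemma span_image_finite:
  fixes f :: "'i \<Rightarrow> 'a::real_vector"
  assumes "finite I"
  shows "span (f ` I) = range (\<lambda>c. \<Sum>x\<in>I. c x *\<^sub>R f x)"
proof
  show "range (\<lambda>c. \<Sum>x\<in>I. c x *\<^sub>R f x) \<subseteq> span (f ` I)"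
    by (force intro: span_sum span_scale span_base)
  show "span (f ` I) \<subseteq> range (\<lambda>c. \<Sum>x\<in>I. c x *\<^sub>R f x)"
    using assms
  proof (induction I rule: finite_induct)
    case empty
    then show ?case by auto
  next
    case (insert x I)
    show ?case
    proof
      fix y assume "y \<in> span (f ` insert x I)"
      then obtain k where "y - k *\<^sub>R f x \<in> span (f ` I)" by (auto simp: span_insert)
      then obtain c where c: "y - k *\<^sub>R f x = (\<Sum>z\<in>I. c z *\<^sub>R f z)" using insert.IH by blast
      have "(\<Sum>z\<in>I. (c(x := k)) z *\<^sub>R f z) = (\<Sum>z\<in>I. c z *\<^sub>R f z)"
        using insert.hyps(2) by (intro sum.cong) auto
      then have "y = (\<Sum>z\<in>insert x I. (c(x := k)) z *\<^sub>R f z)"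
        using insert.hyps c by (simp add: algebra_simps)
      then show "y \<in> range (\<lambda>c. \<Sum>z\<in>insert x I. c z *\<^sub>R f z)" by blast
    qed
  qed
qed

lemma indep_family_linear_form_bound:
  fixes f :: "'i \<Rightarrow> 'a::euclidean_space"
  assumes "finite I" "indep_family f I"
  shows "\<exists>K. \<forall>c. \<bar>\<Sum>x\<in>I. c x * h x\<bar> \<le> K * norm (\<Sum>x\<in>I. c x *\<^sub>R f x)"
proof -
  obtain g where g: "linear g" "\<forall>y\<in>f ` I. g y = h (inv_into I f y)"
    using linear_independent_extend[OF indep_family_independent[OF assms]] by (metis comp_apply)
  obtain K where K: "\<forall>z. norm (g z) \<le> K * norm z" using linear_bounded[OF g(1)] by blast
  have "g (\<Sum>x\<in>I. c x *\<^sub>R f x) = (\<Sum>x\<in>I. c x * h x)" for c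
    using g indep_family_inj_on[OF assms] by (simp add: linear_sum linear_scale)
  then show ?thesis using K by (metis real_norm_def)
qed

lemma finite_uniform_bound:
  fixes P :: "'i \<Rightarrow> real \<Rightarrow> bool"
  assumes "finite A" "\<And>x. x \<in> A \<Longrightarrow> \<exists>K. P x K"
    and "\<And>x K K'. x \<in> A \<Longrightarrow> P x K \<Longrightarrow> K \<le> K' \<Longrightarrow> P x K'"
  shows "\<exists>K>0. \<forall>x\<in>A. P x K"
proof -
  have "\<forall>x\<in>A. eventually (P x) at_top"
    using assms(2,3) unfolding eventually_at_top_linorder by blast
  then have "eventually (\<lambda>K. \<forall>x\<in>A. P x K) at_top" by (rule eventually_ball_finite[OF assms(1)])
  then obtain K0 where "\<forall>K\<ge>K0. \<forall>x\<in>A. P x K" unfolding eventually_at_top_linorder by blast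
  then show ?thesis by (intro exI[of _ "max K0 1"]) auto
qed

lemma indep_family_coeff_bound:
  fixes f :: "'i \<Rightarrow> 'a::euclidean_space"
  assumes "finite I" "indep_family f I"
  shows "\<exists>K>0. \<forall>x\<in>I. \<forall>c. \<bar>c x\<bar> \<le> K * norm (\<Sum>y\<in>I. c y *\<^sub>R f y)"
proof (rule finite_uniform_bound[OF assms(1)])
  fix x assume "x \<in> I"
  then show "\<exists>K. \<forall>c. \<bar>c x\<bar> \<le> K * norm (\<Sum>y\<in>I. c y *\<^sub>R f y)"
    using indep_family_linear_form_bound[OF assms, of "\<lambda>y. if y = x then 1 else 0"] assms(1)
    by (simp add: if_distrib[of "(*) _"] cong: if_cong)
qed (meson mult_right_mono norm_ge_zero order_trans)

lemma indep_family_perturb: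
  fixes f :: "'i \<Rightarrow> 'a::euclidean_space"
  assumes "finite I" "indep_family f I"
  shows "\<exists>\<epsilon>>0. \<forall>g. (\<forall>x\<in>I. norm (f x - g x) < \<epsilon>) \<longrightarrow> indep_family g I"
proof -
  obtain K where K: "K > 0" "\<forall>x\<in>I. \<forall>c. \<bar>c x\<bar> \<le> K * norm (\<Sum>y\<in>I. c y *\<^sub>R f y)"
    using indep_family_coeff_bound[OF assms] by blast
  define \<epsilon> where "\<epsilon> = 1 / (K * (card I + 1))"
  have \<epsilon>_pos: "\<epsilon> > 0" unfolding \<epsilon>_def using K(1) by simp
  have "card I * (K * \<epsilon>) = card I / (card I + 1)" unfolding \<epsilon>_def using K(1) by simp
  then have \<epsilon>_small: "card I * (K * \<epsilon>) < 1" by simp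
  have "indep_family g I" if close: "\<forall>x\<in>I. norm (f x - g x) < \<epsilon>" for g
    unfolding indep_family_def
  proof (intro allI impI ballI)
    fix c x assume g0: "(\<Sum>y\<in>I. c y *\<^sub>R g y) = 0" and x: "x \<in> I"
    define s where "s = (\<Sum>y\<in>I. \<bar>c y\<bar>)"
    have "(\<Sum>y\<in>I. c y *\<^sub>R f y) = (\<Sum>y\<in>I. c y *\<^sub>R (f y - g y))"
      using g0 by (simp add: scaleR_diff_right sum_subtractf)
    also have "norm \<dots> \<le> (\<Sum>y\<in>I. \<bar>c y\<bar> * \<epsilon>)"
      using close by (intro order_trans[OF norm_sum] sum_mono) (simp add: mult_left_mono less_imp_le)
    finally have "norm (\<Sum>y\<in>I. c y *\<^sub>R f y) \<le> \<epsilon> * s" by (simp add: s_def sum_distrib_left mult.commute)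
    have each: "\<bar>c y\<bar> \<le> K * \<epsilon> * s" if "y \<in> I" for y
    proof -
      have "\<bar>c y\<bar> \<le> K * norm (\<Sum>y\<in>I. c y *\<^sub>R f y)" using K(2) that by blast
      also have "\<dots> \<le> K * (\<epsilon> * s)" by (rule mult_left_mono) (use K(1) \<open>norm _ \<le> \<epsilon> * s\<close> in auto)
      finally show ?thesis by (simp add: mult.assoc)
    qed
    then have "s \<le> card I * (K * \<epsilon> * s)" unfolding s_def by (rule sum_bounded_above)
    then have "s \<le> 0" using \<epsilon>_small mult_less_cancel_right2[of "card I * (K * \<epsilon>)" s]
      by (simp add: mult.assoc)
    then have "s = 0" unfolding s_def by (simp add: sum_nonneg antisym)
    then show "c x = 0" using each[OF x] by simp
  qed
  then show ?thesis using \<epsilon>_pos by blast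
qed

lemma indep_family_Sigma:
  fixes f :: "'r \<times> 'j \<Rightarrow> 'a::real_inner"
  assumes "finite R" "\<And>r. r \<in> R \<Longrightarrow> finite (J r)"
    and "\<And>r. r \<in> R \<Longrightarrow> indep_family (\<lambda>j. f (r, j)) (J r)"
    and "\<And>r r' j j'. r \<in> R \<Longrightarrow> r' \<in> R \<Longrightarrow> r \<noteq> r' \<Longrightarrow> j \<in> J r \<Longrightarrow> j' \<in> J r' \<Longrightarrow>
      f (r, j) \<bullet> f (r', j') = 0"
  shows "indep_family f (Sigma R J)"
  unfolding indep_family_def
proof (intro allI impI ballI)
  fix c x assume sum0: "(\<Sum>x\<in>Sigma R J. c x *\<^sub>R f x) = 0" and x: "x \<in> Sigma R J"
  define y where "y r = (\<Sum>j\<in>J r. c (r, j) *\<^sub>R f (r, j))" for r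
  obtain r0 j0 where x': "x = (r0, j0)" "r0 \<in> R" "j0 \<in> J r0" using x by auto
  have "(\<Sum>r\<in>R. y r) = (\<Sum>(r, j)\<in>Sigma R J. c (r, j) *\<^sub>R f (r, j))"
    unfolding y_def by (rule sum.Sigma) (use assms(1,2) in auto)
  then have "(\<Sum>r\<in>R. y r) = 0" using sum0 by (simp add: case_prod_beta')
  have orth: "y r0 \<bullet> y r = 0" if "r \<in> R - {r0}" for r
    unfolding y_def inner_sum_left inner_sum_right using that x'(2)
    by (intro sum.neutral ballI) (auto simp: assms(4))
  have "0 = (\<Sum>r\<in>R. y r0 \<bullet> y r)" using \<open>(\<Sum>r\<in>R. y r) = 0\<close> by (simp flip: inner_sum_right)
  also have "\<dots> = y r0 \<bullet> y r0"
    using sum.remove[OF assms(1) x'(2), of "\<lambda>r. y r0 \<bullet> y r"] orth by simp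
  finally have "y r0 = 0" by simp
  then show "c x = 0" using indep_familyD[OF assms(3)[OF x'(2)], of "\<lambda>j. c (r0, j)"] x' by (simp add: y_def)
qed

lemma indep_family_tilted:
  fixes a :: "'j \<Rightarrow> 'a::real_inner"
  assumes "finite J" "j0 \<in> J" "(\<Sum>j\<in>J. a j) = 0" "indep_family a (J - {j0})"
    and "\<forall>j\<in>J. a j \<bullet> v = 0" "v \<noteq> 0" "\<alpha> \<noteq> 0" "\<beta> \<noteq> 0"
  shows "indep_family (\<lambda>j. \<alpha> *\<^sub>R a j + \<beta> *\<^sub>R v) J"
  unfolding indep_family_def
proof (intro allI impI)
  fix c assume "(\<Sum>j\<in>J. c j *\<^sub>R (\<alpha> *\<^sub>R a j + \<beta> *\<^sub>R v)) = 0"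
  then have h: "\<alpha> *\<^sub>R (\<Sum>j\<in>J. c j *\<^sub>R a j) + (\<beta> * (\<Sum>j\<in>J. c j)) *\<^sub>R v = 0"
    by (simp add: algebra_simps sum.distrib scaleR_sum_right scaleR_sum_left sum_distrib_left)
  have "(\<Sum>j\<in>J. c j *\<^sub>R a j) \<bullet> v = 0" using assms(5) by (simp add: inner_sum_left)
  then have "\<beta> * (\<Sum>j\<in>J. c j) * (v \<bullet> v) = 0"
    using arg_cong[OF h, of "\<lambda>w. w \<bullet> v"] by (simp add: inner_add_left)
  then have sum_c: "(\<Sum>j\<in>J. c j) = 0" using assms(6,8) by simp
  then have "(\<Sum>j\<in>J. c j *\<^sub>R a j) = 0" using h assms(7) by simp
  then have "(\<Sum>j\<in>J. (c j - c j0) *\<^sub>R a j) = 0"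
    using assms(3) by (simp add: scaleR_diff_left sum_subtractf flip: scaleR_sum_right)
  then have "(\<Sum>j\<in>J - {j0}. (c j - c j0) *\<^sub>R a j) = 0"
    using sum.remove[OF assms(1,2), of "\<lambda>j. (c j - c j0) *\<^sub>R a j"] by simp
  then have const: "c j = c j0" if "j \<in> J" for j
    using indep_familyD[OF assms(4), of "\<lambda>j. c j - c j0" j] that by fastforce
  then have "card J * c j0 = 0" using sum_c by simp
  then have "c j0 = 0" using assms(1,2) by auto
  then show "\<forall>j\<in>J. c j = 0" using const by simp
qed

lemma OPT_le:
  "dim (span (B ` C)) = k \<Longrightarrow> OPT col C k \<le> (\<Sum>c\<in>C. (norm (col c - B c))\<^sup>2)"
  unfolding OPT_def by (rule cInf_lower) (auto intro!: bdd_belowI[of _ 0] sum_nonneg)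

lemma OPT_pos:
  fixes col B :: "'i \<Rightarrow> 'a::euclidean_space"
  assumes "finite C" "indep_family col C" "k < card C" "dim (span (B ` C)) = k"
  shows "0 < OPT col C k"
proof -
  obtain \<epsilon> where \<epsilon>: "\<epsilon> > 0" "\<forall>g. (\<forall>x\<in>C. norm (col x - g x) < \<epsilon>) \<longrightarrow> indep_family g C"
    using indep_family_perturb[OF assms(1,2)] by blast
  have "\<epsilon>\<^sup>2 \<le> (\<Sum>c\<in>C. (norm (col c - B' c))\<^sup>2)" if "dim (span (B' ` C)) = k" for B'
  proof -
    have "\<not> indep_family B' C"
    proof
      assume "indep_family B' C"
      then have "dim (span (B' ` C)) = card C" by (rule dim_span_indep_family[OF assms(1)])
      then show False using that assms(3) by simp
    qed
    then obtain x where x: "x \<in> C" "\<epsilon> \<le> norm (col x - B' x)" using \<epsilon>(2) by (meson not_less)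
    then have "\<epsilon>\<^sup>2 \<le> (norm (col x - B' x))\<^sup>2" using \<epsilon>(1) by (simp add: power_mono)
    also have "\<dots> \<le> (\<Sum>c\<in>C. (norm (col c - B' c))\<^sup>2)" by (rule member_le_sum[OF x(1) _ assms(1)]) simp
    finally show ?thesis .
  qed
  moreover have "(\<Sum>c\<in>C. (norm (col c - B c))\<^sup>2) \<in> {(\<Sum>c\<in>C. (norm (col c - B' c))\<^sup>2) | B'. dim (span (B' ` C)) = k}"
    using assms(4) by auto
  ultimately have "\<epsilon>\<^sup>2 \<le> OPT col C k" unfolding OPT_def by (intro cInf_greatest) auto
  then show ?thesis using \<epsilon>(1) by (meson order_less_le_trans zero_less_power)
qed

lemma orth_proj_in_span:
  fixes x :: "'a::euclidean_space"
  shows "orth_proj (span X) x \<in> span X"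
proof -
  obtain y z where yz: "y \<in> span X" "\<And>w. w \<in> span X \<Longrightarrow> orthogonal z w" "x = y + z"
    using orthogonal_subspace_decomp_exists by blast
  have unique: "\<exists>!y. y \<in> span X \<and> (\<forall>w\<in>span X. (x - y) \<bullet> w = 0)"
  proof (rule ex1I[of _ y])
    show "y \<in> span X \<and> (\<forall>w\<in>span X. (x - y) \<bullet> w = 0)" using yz by (simp add: orthogonal_def)
  next
    fix y' assume y': "y' \<in> span X \<and> (\<forall>w\<in>span X. (x - y') \<bullet> w = 0)"
    then have "y - y' \<in> span X" using yz(1) by (simp add: span_diff)
    then have "(x - y') \<bullet> (y - y') = 0" "(x - y) \<bullet> (y - y') = 0"
      using y' yz by (auto simp: orthogonal_def)
    then have "(y - y') \<bullet> (y - y') = 0" by (simp add: inner_diff_left inner_diff_right)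
    then show "y' = y" by simp
  qed
  show ?thesis unfolding orth_proj_def using theI'[OF unique] by blast
qed

lemma Er_ge_dist:
  fixes col :: "'i \<Rightarrow> 'a::euclidean_space"
  assumes "finite C" "c \<in> C" "\<And>y. y \<in> span (col ` S) \<Longrightarrow> m \<le> (norm (col c - y))\<^sup>2"
  shows "m \<le> Er col C S"
proof -
  have "m \<le> (norm (col c - orth_proj (span (col ` S)) (col c)))\<^sup>2"
    by (rule assms(3)[OF orth_proj_in_span])
  also have "\<dots> \<le> Er col C S" unfolding Er_def by (rule member_le_sum[OF assms(2) _ assms(1)]) simp
  finally show ?thesis .
qed

lemma span_Un_orthogonal_closer:
  fixes x :: "'a::real_inner"
  assumes "y \<in> span (Y1 \<union> Y2)" "x \<in> span E" "Y1 \<subseteq> span E"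
    and "\<And>u w. u \<in> Y2 \<Longrightarrow> w \<in> E \<Longrightarrow> u \<bullet> w = 0"
  shows "\<exists>y1\<in>span Y1. norm (x - y1) \<le> norm (x - y)"
proof -
  obtain y1 y2 where y: "y = y1 + y2" "y1 \<in> span Y1" "y2 \<in> span Y2"
    using assms(1) unfolding span_Un by blast
  have "span Y1 \<subseteq> span E" using assms(3) by (metis span_mono span_span)
  then have "x - y1 \<in> span E" using assms(2) y(2) by (auto intro: span_diff)
  moreover have "orthogonal w y2" if "w \<in> E" for w
    using orthogonal_to_span[OF y(3)] assms(4) that by (simp add: orthogonal_def inner_commute)
  ultimately have "orthogonal y2 (x - y1)"
    by (intro orthogonal_to_span[of "x - y1" E]) (auto simp: orthogonal_commute)
  then have "orthogonal (x - y1) (- y2)" by (simp add: orthogonal_def inner_commute)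
  then have "(norm (x - y))\<^sup>2 = (norm (x - y1))\<^sup>2 + (norm y2)\<^sup>2"
    using norm_add_Pythagorean[of "x - y1" "- y2"] y(1) by (simp add: algebra_simps)
  then show ?thesis using y(2) by (intro bexI[of _ y1]) (auto intro: power2_le_imp_le)
qed

lemma tilted_dist_ge:
  fixes a :: "'j \<Rightarrow> 'a::real_inner" and \<alpha> \<beta> K :: real
  assumes "finite J" "norm v = 1" "\<forall>j\<in>J. a j \<bullet> v = 0"
    and K: "\<forall>c. \<bar>\<Sum>j\<in>J. c j\<bar> \<le> K * norm (\<Sum>j\<in>J. c j *\<^sub>R a j)"
    and "\<alpha> > 0" "\<beta> \<ge> 0" "y \<in> span ((\<lambda>j. \<alpha> *\<^sub>R a j + \<beta> *\<^sub>R v) ` J)"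
  shows "1 - (\<beta> * K / \<alpha>)\<^sup>2 \<le> (norm (v - y))\<^sup>2"
proof -
  have "y \<in> range (\<lambda>c. \<Sum>j\<in>J. c j *\<^sub>R (\<alpha> *\<^sub>R a j + \<beta> *\<^sub>R v))"
    using assms(7) unfolding span_image_finite[OF assms(1)] .
  then obtain c where c: "y = (\<Sum>j\<in>J. c j *\<^sub>R (\<alpha> *\<^sub>R a j + \<beta> *\<^sub>R v))" by blast
  define w where "w = (\<Sum>j\<in>J. c j *\<^sub>R a j)"
  define p where "p = \<beta> * (\<Sum>j\<in>J. c j)"
  define q where "q = \<alpha> * norm w"
  define \<epsilon> where "\<epsilon> = \<beta> * K / \<alpha>"
  have "y = \<alpha> *\<^sub>R w + p *\<^sub>R v" unfolding c w_def p_def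
    by (simp add: algebra_simps sum.distrib scaleR_sum_right scaleR_sum_left sum_distrib_left)
  then have vy: "v - y = (1 - p) *\<^sub>R v + (- (\<alpha> *\<^sub>R w))" by (simp add: algebra_simps)
  have "w \<bullet> v = 0" unfolding w_def using assms(3) by (simp add: inner_sum_left)
  then have "orthogonal ((1 - p) *\<^sub>R v) (- (\<alpha> *\<^sub>R w))" by (simp add: orthogonal_def inner_commute)
  then have "(norm (v - y))\<^sup>2 = (norm ((1 - p) *\<^sub>R v))\<^sup>2 + (norm (\<alpha> *\<^sub>R w))\<^sup>2"
    using norm_add_Pythagorean unfolding vy by fastforce
  also have "\<dots> = (1 - p)\<^sup>2 + q\<^sup>2" using assms(2) by (simp add: q_def power_mult_distrib)
  finally have dist: "(norm (v - y))\<^sup>2 = (1 - p)\<^sup>2 + q\<^sup>2" .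
  have "\<bar>p\<bar> \<le> \<beta> * (K * norm w)" unfolding p_def w_def
    using K assms(6) by (simp add: abs_mult mult_left_mono)
  then have "\<bar>p\<bar> \<le> \<epsilon> * q" using assms(5) by (simp add: \<epsilon>_def q_def)
  moreover have "1 - 2 * \<bar>p\<bar> \<le> (1 - p)\<^sup>2" by (cases "p \<ge> 0") (auto simp: power2_eq_square algebra_simps)
  moreover have "2 * (\<epsilon> * q) \<le> \<epsilon>\<^sup>2 + q\<^sup>2" using sum_squares_bound[of \<epsilon> q] by (simp add: mult.assoc)
  ultimately have "1 - \<epsilon>\<^sup>2 \<le> (1 - p)\<^sup>2 + q\<^sup>2" by linarith
  then show ?thesis using dist by (simp add: \<epsilon>_def)
qed

lemma tilted_simplex_dist_ge:
  fixes a :: "'j \<Rightarrow> 'a::real_inner" and \<alpha> \<beta> K :: real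
  assumes "finite J" "j0 \<in> J" "(\<Sum>j\<in>J. a j) = 0" "norm v = 1" "\<forall>j\<in>J. a j \<bullet> v = 0"
    and "\<forall>c. \<bar>\<Sum>j\<in>J - {j0}. c j\<bar> \<le> K * norm (\<Sum>j\<in>J - {j0}. c j *\<^sub>R a j)"
    and "\<alpha> > 0" "\<beta> > 0" "y \<in> span ((\<lambda>j. \<alpha> *\<^sub>R a j + \<beta> *\<^sub>R v) ` (J - {j0}))"
  shows "(card J * \<beta>)\<^sup>2 * (1 - (\<beta> * K / \<alpha>)\<^sup>2) \<le> (norm (\<alpha> *\<^sub>R a j0 + \<beta> *\<^sub>R v - y))\<^sup>2"
proof -
  define gen where "gen j = \<alpha> *\<^sub>R a j + \<beta> *\<^sub>R v" for j
  define s where "s = (\<Sum>j\<in>J - {j0}. gen j)"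
  define m where "m = card J * \<beta>"
  have "card J > 0" using assms(1,2) card_gt_0_iff by blast
  then have m: "m > 0" unfolding m_def using assms(8) by simp
  have sum_a: "(\<Sum>j\<in>J - {j0}. a j) = - a j0"
    using sum.remove[OF assms(1,2), of a] assms(3) by (simp add: add_eq_0_iff)
  have card: "real (card (J - {j0})) = real (card J) - 1"
    using assms(1,2) \<open>card J > 0\<close> by (simp add: of_nat_diff)
  (* the a j sum to zero, so adding the other generators leaves a multiple of v *)
  have "s = - (\<alpha> *\<^sub>R a j0) + ((real (card J) - 1) * \<beta>) *\<^sub>R v"
    unfolding s_def gen_def using sum_a card
    by (simp add: sum.distrib sum_constant_scaleR flip: scaleR_sum_right)
  then have "gen j0 + s = m *\<^sub>R v" unfolding gen_def m_def by (simp add: algebra_simps)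
  define y' where "y' = (1 / m) *\<^sub>R (y + s)"
  have "gen j0 - y = m *\<^sub>R (v - y')"
    using \<open>gen j0 + s = m *\<^sub>R v\<close> m unfolding y'_def by (simp add: algebra_simps)
  then have dist: "(norm (gen j0 - y))\<^sup>2 = m\<^sup>2 * (norm (v - y'))\<^sup>2"
    using m by (simp add: power_mult_distrib)
  have "s \<in> span (gen ` (J - {j0}))" unfolding s_def by (intro span_sum span_base) auto
  then have "y' \<in> span (gen ` (J - {j0}))"
    using assms(9) unfolding y'_def gen_def by (intro span_scale span_add)
  then have "1 - (\<beta> * K / \<alpha>)\<^sup>2 \<le> (norm (v - y'))\<^sup>2"
    using assms unfolding gen_def by (intro tilted_dist_ge[of "J - {j0}"]) auto
  then have "m\<^sup>2 * (1 - (\<beta> * K / \<alpha>)\<^sup>2) \<le> (norm (gen j0 - y))\<^sup>2"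
    unfolding dist by (simp add: mult_left_mono)
  then show ?thesis unfolding m_def gen_def .
qed

lemma same_scale_bound:
  fixes \<delta> b :: real and l :: nat
  assumes "0 < \<delta>" "\<delta> < 1" "1 \<le> l"
  shows "(1 - \<delta>) * l * ((l + (\<delta> / 2)\<^sup>2) * b\<^sup>2) \<le> (l * b)\<^sup>2 * (1 - (\<delta> / 2)\<^sup>2)"
proof -
  have "(\<delta> / 2)\<^sup>2 * (1 + l) \<le> \<delta> / 4 * (2 * l)"
    using assms by (intro mult_mono) (auto simp: power2_eq_square)
  also have "\<dots> \<le> \<delta> * l" using assms(1) by simp
  finally have "(\<delta> / 2)\<^sup>2 * (1 + l) \<le> \<delta> * l" .
  moreover have "(1 - \<delta>) * (\<delta> / 2)\<^sup>2 \<le> (\<delta> / 2)\<^sup>2" using assms(1) by (simp add: mult_left_le_one_le)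
  ultimately have "(1 - \<delta>) * (l + (\<delta> / 2)\<^sup>2) \<le> l * (1 - (\<delta> / 2)\<^sup>2)"
    by (simp add: algebra_simps)
  then have "l * b\<^sup>2 * ((1 - \<delta>) * (l + (\<delta> / 2)\<^sup>2)) \<le> l * b\<^sup>2 * (l * (1 - (\<delta> / 2)\<^sup>2))"
    by (intro mult_left_mono) auto
  then show ?thesis by (simp add: power2_eq_square algebra_simps)
qed

lemma smaller_scale_bound:
  fixes \<delta> r b b' :: real and l l' N :: nat
  assumes "0 < \<delta>" "\<delta> < 1" "l \<le> N" "1 \<le> l'" "0 \<le> b" "b \<le> r * b'" "0 \<le> r"
    and "(real N + 1) * r \<le> \<delta> / 2"
  shows "(1 - \<delta>) * l * ((l + (\<delta> / 2)\<^sup>2) * b\<^sup>2) \<le> (l' * b')\<^sup>2 * (1 - (\<delta> / 2)\<^sup>2)"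
proof -
  have "\<delta> * \<delta> \<le> 1" using assms(1,2) by (intro mult_le_one) auto
  then have small: "(\<delta> / 2)\<^sup>2 \<le> 1 / 4" by (simp add: power2_eq_square)
  have "(1 - \<delta>) * l \<le> l" using assms(1,2) by (intro mult_left_le_one_le) auto
  then have "(1 - \<delta>) * l \<le> real N + 1" using assms(3) by linarith
  moreover have "l + (\<delta> / 2)\<^sup>2 \<le> real N + 1" using assms(3) small by linarith
  ultimately have "(1 - \<delta>) * l * (l + (\<delta> / 2)\<^sup>2) \<le> (real N + 1) * (real N + 1)"
    by (rule mult_mono) auto
  moreover have "b\<^sup>2 \<le> (r * b')\<^sup>2" using assms(5,6) by (intro power_mono) auto
  ultimately have "(1 - \<delta>) * l * (l + (\<delta> / 2)\<^sup>2) * b\<^sup>2 \<le> (real N + 1) * (real N + 1) * (r * b')\<^sup>2"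
    by (rule mult_mono) auto
  also have "\<dots> = ((real N + 1) * r)\<^sup>2 * b'\<^sup>2" by (simp add: power2_eq_square)
  also have "\<dots> \<le> (\<delta> / 2)\<^sup>2 * b'\<^sup>2" using assms(7,8) by (intro mult_right_mono power_mono) auto
  also have "\<dots> \<le> b'\<^sup>2 * (1 - (\<delta> / 2)\<^sup>2)"
    using small by (simp add: mult.commute mult_left_mono)
  also have "\<dots> \<le> (l' * b')\<^sup>2 * (1 - (\<delta> / 2)\<^sup>2)"
  proof (rule mult_right_mono)
    show "b'\<^sup>2 \<le> (l' * b')\<^sup>2"
      using mult_right_mono[of 1 "(real l')\<^sup>2" "b'\<^sup>2"] assms(4) by (simp add: power_mult_distrib)
  qed (use small in simp)
  finally show ?thesis by (simp add: mult.assoc)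
qed

locale orthogonal_blocks =
  fixes t :: nat and l :: "nat \<Rightarrow> nat"
    and a :: "nat \<Rightarrow> nat \<Rightarrow> 'a::euclidean_space" and v :: "nat \<Rightarrow> 'a"
  assumes l_pos: "i \<in> {1..t} \<Longrightarrow> 1 \<le> l i"
    and norm_a: "i \<in> {1..t} \<Longrightarrow> j \<in> {1..l i} \<Longrightarrow> norm (a i j) = 1"
    and indep_proper: "i \<in> {1..t} \<Longrightarrow> J \<subset> {1..l i} \<Longrightarrow> indep_family (a i) J"
    and sum_a: "i \<in> {1..t} \<Longrightarrow> (\<Sum>j\<in>{1..l i}. a i j) = 0"
    and a_orth: "i \<in> {1..t} \<Longrightarrow> i' \<in> {1..t} \<Longrightarrow> i \<noteq> i' \<Longrightarrow> j \<in> {1..l i} \<Longrightarrow>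
      j' \<in> {1..l i'} \<Longrightarrow> a i j \<bullet> a i' j' = 0"
    and norm_v: "i \<in> {1..t} \<Longrightarrow> norm (v i) = 1"
    and v_orth: "i \<in> {1..t} \<Longrightarrow> i' \<in> {1..t} \<Longrightarrow> i \<noteq> i' \<Longrightarrow> v i \<bullet> v i' = 0"
    and va_orth: "i \<in> {1..t} \<Longrightarrow> i' \<in> {1..t} \<Longrightarrow> j \<in> {1..l i'} \<Longrightarrow> v i \<bullet> a i' j = 0"
begin

abbreviation blocks :: "(nat \<times> nat) set" where
  "blocks \<equiv> SIGMA i:{1..t}. {1..l i}"

definition column :: "(nat \<Rightarrow> real) \<Rightarrow> (nat \<Rightarrow> real) \<Rightarrow> nat \<times> nat \<Rightarrow> 'a" where
  "column \<alpha> \<beta> = (\<lambda>(i, j). \<alpha> i *\<^sub>R a i j + \<beta> i *\<^sub>R v i)"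

lemma column_apply [simp]: "column \<alpha> \<beta> (i, j) = \<alpha> i *\<^sub>R a i j + \<beta> i *\<^sub>R v i"
  by (simp add: column_def)

lemma block_vectors_orthogonal:
  assumes "i \<in> {1..t}" "i' \<in> {1..t}" "i \<noteq> i'" "j \<in> {1..l i}" "j' \<in> {1..l i'}"
  shows "(x *\<^sub>R a i j + y *\<^sub>R v i) \<bullet> (x' *\<^sub>R a i' j' + y' *\<^sub>R v i') = 0"
  using a_orth[OF assms] v_orth[OF assms(1-3)] va_orth[OF assms(1,2,5)]
    va_orth[OF assms(2,1,4)] by (simp add: inner_add_left inner_add_right inner_commute)

lemma indep_family_block_columns:
  assumes "i \<in> {1..t}" "\<alpha> i \<noteq> 0" "\<beta> i \<noteq> 0"
  shows "indep_family (\<lambda>j. column \<alpha> \<beta> (i, j)) {1..l i}"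
proof -
  have last: "l i \<in> {1..l i}" using l_pos[OF assms(1)] by simp
  then have "{1..l i} - {l i} \<subset> {1..l i}" by blast
  then have indep: "indep_family (a i) ({1..l i} - {l i})" by (rule indep_proper[OF assms(1)])
  have "v i \<noteq> 0" using norm_v[OF assms(1)] by auto
  moreover have "\<forall>j\<in>{1..l i}. a i j \<bullet> v i = 0" using va_orth[OF assms(1,1)] by (simp add: inner_commute)
  ultimately have "indep_family (\<lambda>j. \<alpha> i *\<^sub>R a i j + \<beta> i *\<^sub>R v i) {1..l i}"
    using indep_family_tilted[OF _ last sum_a[OF assms(1)] indep] assms(2,3) by blast
  then show ?thesis by simp
qed

lemma indep_family_columns:
  assumes "\<forall>i\<in>{1..t}. \<alpha> i \<noteq> 0 \<and> \<beta> i \<noteq> 0"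
  shows "indep_family (column \<alpha> \<beta>) blocks"
proof (rule indep_family_Sigma)
  show "indep_family (\<lambda>j. column \<alpha> \<beta> (i, j)) {1..l i}" if "i \<in> {1..t}" for i
    using assms that indep_family_block_columns by blast
qed (simp_all add: block_vectors_orthogonal)

(* K bounds, uniformly over the blocks, the linear forms sending every a i j with j \<noteq> j0
   to 1; they control how close v i comes to the span of the tilted columns. *)
definition coeff_sum_bound :: "real \<Rightarrow> bool" where
  "coeff_sum_bound K \<longleftrightarrow> (\<forall>(i, j0)\<in>blocks. \<forall>c.
    \<bar>\<Sum>j\<in>{1..l i} - {j0}. c j\<bar> \<le> K * norm (\<Sum>j\<in>{1..l i} - {j0}. c j *\<^sub>R a i j))"

lemma ex_coeff_sum_bound: "\<exists>K>0. coeff_sum_bound K"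
  unfolding coeff_sum_bound_def
proof (rule finite_uniform_bound)
  fix x assume "x \<in> blocks"
  then obtain i j0 where x: "x = (i, j0)" "i \<in> {1..t}" "j0 \<in> {1..l i}" by blast
  then have "indep_family (a i) ({1..l i} - {j0})" by (intro indep_proper) blast+
  then show "\<exists>K. case x of (i, j0) \<Rightarrow> \<forall>c.
      \<bar>\<Sum>j\<in>{1..l i} - {j0}. c j\<bar> \<le> K * norm (\<Sum>j\<in>{1..l i} - {j0}. c j *\<^sub>R a i j)"
    using indep_family_linear_form_bound[of _ "a i", where h = "\<lambda>_. 1"] x(1) by simp
qed (simp, clarsimp, meson mult_right_mono norm_ge_zero order_trans)

lemma column_orthogonal_other_block:
  assumes "(p, q) \<in> blocks" "i \<in> {1..t}" "p \<noteq> i" "w \<in> insert (v i) (a i ` {1..l i})"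
  shows "column \<alpha> \<beta> (p, q) \<bullet> w = 0"
proof -
  have pq: "p \<in> {1..t}" "q \<in> {1..l p}" using assms(1) by auto
  from assms(4) consider "w = v i" | j where "j \<in> {1..l i}" "w = a i j" by blast
  then show ?thesis
  proof cases
    case 1
    then show ?thesis
      using block_vectors_orthogonal[OF pq(1) assms(2,3) pq(2) _, of "l i" "\<alpha> p" "\<beta> p" 0 1] l_pos[OF assms(2)]
      by simp
  next
    case (2 j)
    then show ?thesis
      using block_vectors_orthogonal[OF pq(1) assms(2,3) pq(2) 2(1), of "\<alpha> p" "\<beta> p" 1 0] by simp
  qed
qed

lemma dist_other_columns_ge:
  fixes \<alpha> \<beta> :: "nat \<Rightarrow> real" and K :: real
  assumes K: "coeff_sum_bound K"
    and pos: "\<alpha> i > 0" "\<beta> i > 0" and ij: "(i, j0) \<in> blocks"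
    and y: "y \<in> span (column \<alpha> \<beta> ` (blocks - {(i, j0)}))"
  shows "(l i * \<beta> i)\<^sup>2 * (1 - (\<beta> i * K / \<alpha> i)\<^sup>2) \<le> (norm (column \<alpha> \<beta> (i, j0) - y))\<^sup>2"
proof -
  have i: "i \<in> {1..t}" "j0 \<in> {1..l i}" using ij by auto
  define gen where "gen j = \<alpha> i *\<^sub>R a i j + \<beta> i *\<^sub>R v i" for j
  define E where "E = insert (v i) (a i ` {1..l i})"
  have "blocks - {(i, j0)} = Pair i ` ({1..l i} - {j0}) \<union> (blocks - {i} \<times> {1..l i})"
    using i by auto
  then have split: "column \<alpha> \<beta> ` (blocks - {(i, j0)}) =
      gen ` ({1..l i} - {j0}) \<union> column \<alpha> \<beta> ` (blocks - {i} \<times> {1..l i})"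
    by (simp add: image_Un image_image gen_def)
  have in_E: "gen j \<in> span E" if "j \<in> {1..l i}" for j
    unfolding gen_def E_def using that by (intro span_add span_scale span_base) auto
  have orth_E: "u \<bullet> w = 0" if "u \<in> column \<alpha> \<beta> ` (blocks - {i} \<times> {1..l i})" "w \<in> E" for u w
    using that column_orthogonal_other_block[OF _ i(1)] unfolding E_def by blast
  obtain y1 where y1: "y1 \<in> span (gen ` ({1..l i} - {j0}))" "norm (gen j0 - y1) \<le> norm (gen j0 - y)"
    using span_Un_orthogonal_closer[OF y[unfolded split] in_E[OF i(2)] _ orth_E] in_E by blast
  have "\<forall>j\<in>{1..l i}. a i j \<bullet> v i = 0" using va_orth[OF i(1) i(1)] by (simp add: inner_commute)
  then have "(card {1..l i} * \<beta> i)\<^sup>2 * (1 - (\<beta> i * K / \<alpha> i)\<^sup>2) \<le> (norm (gen j0 - y1))\<^sup>2"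
    using K[unfolded coeff_sum_bound_def] ij y1(1) pos sum_a[OF i(1)] norm_v[OF i(1)] unfolding gen_def
    by (intro tilted_simplex_dist_ge) auto
  also have "\<dots> \<le> (norm (gen j0 - y))\<^sup>2" using y1(2) by (simp add: power_mono)
  finally show ?thesis by (simp add: gen_def)
qed

lemma Er_columns_ge:
  fixes \<alpha> \<beta> :: "nat \<Rightarrow> real" and K :: real
  assumes K: "coeff_sum_bound K"
    and pos: "\<forall>i\<in>{1..t}. \<alpha> i > 0 \<and> \<beta> i > 0" and i: "i \<in> {1..t}"
    and S: "S \<subseteq> blocks" "card S < (\<Sum>p\<in>{1..i}. l p)"
  shows "\<exists>i'\<in>{1..i}. (l i' * \<beta> i')\<^sup>2 * (1 - (\<beta> i' * K / \<alpha> i')\<^sup>2) \<le> Er (column \<alpha> \<beta>) blocks S"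
proof -
  have "\<not> (SIGMA p:{1..i}. {1..l p}) \<subseteq> S"
  proof
    assume "(SIGMA p:{1..i}. {1..l p}) \<subseteq> S"
    then have "card (SIGMA p:{1..i}. {1..l p}) \<le> card S"
      using finite_subset[OF S(1)] by (intro card_mono) auto
    then show False using S(2) by simp
  qed
  then obtain i' j0 where missing: "i' \<in> {1..i}" "j0 \<in> {1..l i'}" "(i', j0) \<notin> S" by blast
  then have ij: "(i', j0) \<in> blocks" using i by auto
  have "span (column \<alpha> \<beta> ` S) \<subseteq> span (column \<alpha> \<beta> ` (blocks - {(i', j0)}))"
    using S(1) missing(3) by (intro span_mono image_mono) auto
  moreover have "\<alpha> i' > 0" "\<beta> i' > 0" using pos ij by auto
  ultimately have "(l i' * \<beta> i')\<^sup>2 * (1 - (\<beta> i' * K / \<alpha> i')\<^sup>2) \<le> Er (column \<alpha> \<beta>) blocks S"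
    using dist_other_columns_ge[OF K _ _ ij] by (intro Er_ge_dist[OF _ ij]) blast+
  then show ?thesis using missing(1) by blast
qed

(* The rank-k_i competitor for OPT: without its v-component, block i sums to zero and
   contributes only l i - 1 dimensions. *)
definition truncated_columns :: "nat \<Rightarrow> (nat \<Rightarrow> real) \<Rightarrow> (nat \<Rightarrow> real) \<Rightarrow> nat \<times> nat \<Rightarrow> 'a" where
  "truncated_columns i \<alpha> \<beta> =
    (\<lambda>(p, q). if p < i then column \<alpha> \<beta> (p, q) else if p = i then \<alpha> i *\<^sub>R a i q else 0)"

lemma truncated_columns_block:
  "p \<le> i \<Longrightarrow> truncated_columns i \<alpha> \<beta> (p, q) =
    (if p < i then \<alpha> p else \<alpha> i) *\<^sub>R a p q + (if p < i then \<beta> p else 0) *\<^sub>R v p"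
  by (auto simp: truncated_columns_def)

definition kept_indices :: "nat \<Rightarrow> (nat \<times> nat) set" where
  "kept_indices i = (SIGMA p:{1..i}. if p = i then {1..l i - 1} else {1..l p})"

lemma card_kept_indices:
  assumes i: "i \<in> {1..t}"
  shows "card (kept_indices i) = (\<Sum>p\<in>{1..i}. l p) - 1"
proof -
  have "card (kept_indices i) = (\<Sum>p\<in>{1..i}. card (if p = i then {1..l i - 1} else {1..l p}))"
    unfolding kept_indices_def by (rule card_SigmaI) auto
  also have "\<dots> = card {1..l i - 1} + (\<Sum>p\<in>{1..i} - {i}. card (if p = i then {1..l i - 1} else {1..l p}))"
    using i by (subst sum.remove[of _ i]) auto
  also have "(\<Sum>p\<in>{1..i} - {i}. card (if p = i then {1..l i - 1} else {1..l p})) = (\<Sum>p\<in>{1..i} - {i}. l p)"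
    by (rule sum.cong) auto
  also have "(\<Sum>p\<in>{1..i}. l p) = l i + (\<Sum>p\<in>{1..i} - {i}. l p)" by (rule sum.remove) (use i in auto)
  then have "card {1..l i - 1} + (\<Sum>p\<in>{1..i} - {i}. l p) = (\<Sum>p\<in>{1..i}. l p) - 1"
    using l_pos[OF i] by simp
  finally show ?thesis .
qed

lemma indep_family_truncated_columns:
  fixes \<alpha> \<beta> :: "nat \<Rightarrow> real"
  assumes pos: "\<forall>p\<in>{1..t}. \<alpha> p \<noteq> 0 \<and> \<beta> p \<noteq> 0" and i: "i \<in> {1..t}"
  shows "indep_family (truncated_columns i \<alpha> \<beta>) (kept_indices i)"
  unfolding kept_indices_def
proof (rule indep_family_Sigma)
  fix p assume p: "p \<in> {1..i}"
  show "indep_family (\<lambda>q. truncated_columns i \<alpha> \<beta> (p, q)) (if p = i then {1..l i - 1} else {1..l p})"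
  proof (cases "p < i")
    case True
    then show ?thesis
      using indep_family_block_columns[of p \<alpha> \<beta>] pos p i by (simp add: truncated_columns_def)
  next
    case False
    then have "p = i" using p by simp
    moreover have "{1..l i - 1} \<subset> {1..l i}" using l_pos[OF i] by auto
    ultimately show ?thesis
      using indep_family_scaleR[OF _ indep_proper[OF i]] pos i by (simp add: truncated_columns_def)
  qed
next
  fix p p' q q'
  assume pp: "p \<in> {1..i}" "p' \<in> {1..i}" "p \<noteq> p'"
    "q \<in> (if p = i then {1..l i - 1} else {1..l p})" "q' \<in> (if p' = i then {1..l i - 1} else {1..l p'})"
  then have "q \<in> {1..l p}" "q' \<in> {1..l p'}" by (auto split: if_splits)
  moreover have "p \<in> {1..t}" "p' \<in> {1..t}" "p \<le> i" "p' \<le> i" using pp(1,2) i by auto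
  ultimately show "truncated_columns i \<alpha> \<beta> (p, q) \<bullet> truncated_columns i \<alpha> \<beta> (p', q') = 0"
    using pp(3) unfolding truncated_columns_block[OF \<open>p \<le> i\<close>] truncated_columns_block[OF \<open>p' \<le> i\<close>]
    by (intro block_vectors_orthogonal)
qed auto

lemma span_truncated_columns:
  assumes i: "i \<in> {1..t}"
  shows "span (truncated_columns i \<alpha> \<beta> ` blocks) = span (truncated_columns i \<alpha> \<beta> ` kept_indices i)"
proof -
  let ?B = "truncated_columns i \<alpha> \<beta>"
  have li: "l i \<ge> 1" using l_pos[OF i] .
  have "?B ` blocks \<subseteq> span (?B ` kept_indices i)"
  proof (clarify)
    fix p q assume pq: "p \<in> {1..t}" "q \<in> {1..l p}"
    consider "p < i \<or> (p = i \<and> q < l i)" | "p = i" "q = l i" | "i < p" using pq by fastforce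
    then show "?B (p, q) \<in> span (?B ` kept_indices i)"
    proof cases
      case 1
      then have "(p, q) \<in> kept_indices i" using pq by (auto simp: kept_indices_def)
      then show ?thesis by (simp add: span_base)
    next
      case 2
      have "{1..l i} = insert (l i) {1..l i - 1}" using li by auto
      then have "(\<Sum>j\<in>{1..l i}. a i j) = a i (l i) + (\<Sum>j\<in>{1..l i - 1}. a i j)"
        using li by simp
      then have "?B (p, q) = - (\<Sum>j\<in>{1..l i - 1}. ?B (i, j))"
        using 2 sum_a[OF i]
        by (simp add: truncated_columns_def eq_neg_iff_add_eq_0 flip: scaleR_sum_right scaleR_right_distrib)
      moreover have "(\<Sum>j\<in>{1..l i - 1}. ?B (i, j)) \<in> span (?B ` kept_indices i)"
        using i by (intro span_sum span_base) (auto simp: kept_indices_def)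
      ultimately show ?thesis by (simp add: span_neg)
    next
      case 3
      then show ?thesis by (simp add: truncated_columns_def span_zero)
    qed
  qed
  moreover have "kept_indices i \<subseteq> blocks" using i by (auto simp: kept_indices_def split: if_splits)
  ultimately show ?thesis
    unfolding span_eq by (meson image_mono span_superset subset_trans)
qed

lemma dim_span_truncated_columns:
  fixes \<alpha> \<beta> :: "nat \<Rightarrow> real"
  assumes "\<forall>p\<in>{1..t}. \<alpha> p \<noteq> 0 \<and> \<beta> p \<noteq> 0" "i \<in> {1..t}"
  shows "dim (span (truncated_columns i \<alpha> \<beta> ` blocks)) = (\<Sum>p\<in>{1..i}. l p) - 1"
  using dim_span_indep_family[OF _ indep_family_truncated_columns[OF assms]]
    card_kept_indices[OF assms(2)] span_truncated_columns[OF assms(2)]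
  by (simp add: kept_indices_def)

lemma truncated_columns_error:
  fixes \<alpha> \<beta> :: "nat \<Rightarrow> real"
  assumes i: "i \<in> {1..t}"
  shows "(\<Sum>c\<in>blocks. (norm (column \<alpha> \<beta> c - truncated_columns i \<alpha> \<beta> c))\<^sup>2) =
    l i * (\<beta> i)\<^sup>2 + (\<Sum>p\<in>{i<..t}. l p * ((\<alpha> p)\<^sup>2 + (\<beta> p)\<^sup>2))"
proof -
  let ?err = "\<lambda>c. (norm (column \<alpha> \<beta> c - truncated_columns i \<alpha> \<beta> c))\<^sup>2"
  have block: "(\<Sum>q\<in>{1..l p}. ?err (p, q)) =
      (if p = i then l i * (\<beta> i)\<^sup>2 else 0) + (if i < p then l p * ((\<alpha> p)\<^sup>2 + (\<beta> p)\<^sup>2) else 0)"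
    if p: "p \<in> {1..t}" for p
  proof -
    have "?err (p, q) = (if p = i then (\<beta> i)\<^sup>2 else 0) + (if i < p then (\<alpha> p)\<^sup>2 + (\<beta> p)\<^sup>2 else 0)"
      if q: "q \<in> {1..l p}" for q
    proof -
      have "orthogonal (\<alpha> p *\<^sub>R a p q) (\<beta> p *\<^sub>R v p)"
        using va_orth[OF p p q] by (simp add: orthogonal_def inner_commute)
      then have "(norm (column \<alpha> \<beta> (p, q)))\<^sup>2 = (\<alpha> p)\<^sup>2 + (\<beta> p)\<^sup>2"
        using norm_a[OF p q] norm_v[OF p] by (simp add: norm_add_Pythagorean)
      then show ?thesis using norm_v[OF p] by (auto simp: truncated_columns_def)
    qed
    then show ?thesis by (simp add: sum.distrib)
  qed
  have "(\<Sum>c\<in>blocks. ?err c) = (\<Sum>p\<in>{1..t}. \<Sum>q\<in>{1..l p}. ?err (p, q))"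
    by (subst sum.Sigma) (simp_all add: split_def del: column_apply)
  also have "\<dots> = (\<Sum>p\<in>{1..t}. (if p = i then l i * (\<beta> i)\<^sup>2 else 0) +
      (if i < p then l p * ((\<alpha> p)\<^sup>2 + (\<beta> p)\<^sup>2) else 0))"
    by (rule sum.cong[OF refl]) (rule block)
  also have "\<dots> = l i * (\<beta> i)\<^sup>2 + (\<Sum>p\<in>{1..t}. if i < p then l p * ((\<alpha> p)\<^sup>2 + (\<beta> p)\<^sup>2) else 0)"
    using i by (simp add: sum.distrib)
  also have "(\<Sum>p\<in>{1..t}. if i < p then l p * ((\<alpha> p)\<^sup>2 + (\<beta> p)\<^sup>2) else 0) =
      (\<Sum>p\<in>{p\<in>{1..t}. i < p}. l p * ((\<alpha> p)\<^sup>2 + (\<beta> p)\<^sup>2))"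
    by (rule sum.inter_filter[symmetric]) simp
  also have "{p\<in>{1..t}. i < p} = {i<..t}" using i by auto
  finally show ?thesis .
qed

lemma OPT_columns_le:
  fixes \<alpha> \<beta> :: "nat \<Rightarrow> real"
  assumes "\<forall>p\<in>{1..t}. \<alpha> p \<noteq> 0 \<and> \<beta> p \<noteq> 0" "i \<in> {1..t}"
  shows "OPT (column \<alpha> \<beta>) blocks ((\<Sum>p\<in>{1..i}. l p) - 1) \<le>
    l i * (\<beta> i)\<^sup>2 + (\<Sum>p\<in>{i<..t}. l p * ((\<alpha> p)\<^sup>2 + (\<beta> p)\<^sup>2))"
  using OPT_le[OF dim_span_truncated_columns[OF assms], of "column \<alpha> \<beta>"]
  unfolding truncated_columns_error[OF assms(2)] .

lemma OPT_columns_pos: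
  fixes \<alpha> \<beta> :: "nat \<Rightarrow> real"
  assumes "\<forall>p\<in>{1..t}. \<alpha> p \<noteq> 0 \<and> \<beta> p \<noteq> 0" "i \<in> {1..t}"
  shows "0 < OPT (column \<alpha> \<beta>) blocks ((\<Sum>p\<in>{1..i}. l p) - 1)"
proof (rule OPT_pos[OF _ indep_family_columns[OF assms(1)] _ dim_span_truncated_columns[OF assms]])
  have "l i \<le> (\<Sum>p\<in>{1..i}. l p)" using assms(2) by (intro member_le_sum) auto
  moreover have "(\<Sum>p\<in>{1..i}. l p) \<le> (\<Sum>p\<in>{1..t}. l p)" using assms(2) by (intro sum_mono2) auto
  ultimately show "(\<Sum>p\<in>{1..i}. l p) - 1 < card blocks" using l_pos[OF assms(2)] by simp
qed simp

lemma OPT_geometric_columns_le: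
  fixes \<gamma> r :: real
  assumes "0 < \<gamma>" "0 < r" "r < 1" "i \<in> {1..t}"
  shows "OPT (column (\<lambda>p. \<gamma> * r ^ p) (\<lambda>p. r ^ p)) blocks ((\<Sum>p\<in>{1..i}. l p) - 1) \<le>
    (l i + ((real (\<Sum>p\<in>{1..t}. l p) + 1) * (\<gamma> + 1) * r)\<^sup>2) * (r ^ i)\<^sup>2"
proof -
  define N where "N = (\<Sum>p\<in>{1..t}. l p)"
  have "(\<gamma> * r ^ p)\<^sup>2 + (r ^ p)\<^sup>2 \<le> (\<gamma>\<^sup>2 + 1) * r\<^sup>2 * (r ^ i)\<^sup>2" if "p \<in> {i<..t}" for p
  proof -
    have "r ^ p \<le> r ^ Suc i" using that assms(2,3) by (intro power_decreasing) auto
    then have "(r ^ p)\<^sup>2 \<le> (r * r ^ i)\<^sup>2" using assms(2) by (intro power_mono) auto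
    then have "(\<gamma>\<^sup>2 + 1) * (r ^ p)\<^sup>2 \<le> (\<gamma>\<^sup>2 + 1) * (r * r ^ i)\<^sup>2" by (intro mult_left_mono) auto
    then show ?thesis by (simp add: power_mult_distrib algebra_simps)
  qed
  then have "(\<Sum>p\<in>{i<..t}. l p * ((\<gamma> * r ^ p)\<^sup>2 + (r ^ p)\<^sup>2)) \<le>
      (\<Sum>p\<in>{i<..t}. l p * ((\<gamma>\<^sup>2 + 1) * r\<^sup>2 * (r ^ i)\<^sup>2))"
    by (intro sum_mono mult_left_mono) auto
  also have "\<dots> \<le> (\<Sum>p\<in>{1..t}. l p * ((\<gamma>\<^sup>2 + 1) * r\<^sup>2 * (r ^ i)\<^sup>2))"
    using assms(4) by (intro sum_mono2) auto
  also have "\<dots> = N * (\<gamma>\<^sup>2 + 1) * r\<^sup>2 * (r ^ i)\<^sup>2"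
    by (simp add: N_def sum_distrib_right mult.assoc)
  also have "\<dots> \<le> ((real N + 1) * (\<gamma> + 1) * r)\<^sup>2 * (r ^ i)\<^sup>2"
  proof -
    have "real N \<le> (real N + 1)\<^sup>2" by (simp add: power2_eq_square algebra_simps)
    moreover have "\<gamma>\<^sup>2 + 1 \<le> (\<gamma> + 1)\<^sup>2" using assms(1) by (simp add: power2_eq_square algebra_simps)
    ultimately have "real N * (\<gamma>\<^sup>2 + 1) * r\<^sup>2 \<le> (real N + 1)\<^sup>2 * (\<gamma> + 1)\<^sup>2 * r\<^sup>2"
      by (intro mult_right_mono mult_mono) auto
    then have "real N * (\<gamma>\<^sup>2 + 1) * r\<^sup>2 * (r ^ i)\<^sup>2 \<le> (real N + 1)\<^sup>2 * (\<gamma> + 1)\<^sup>2 * r\<^sup>2 * (r ^ i)\<^sup>2"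
      by (rule mult_right_mono) simp
    then show ?thesis by (simp add: power_mult_distrib)
  qed
  finally have tail: "l i * (r ^ i)\<^sup>2 + (\<Sum>p\<in>{i<..t}. l p * ((\<gamma> * r ^ p)\<^sup>2 + (r ^ p)\<^sup>2)) \<le>
      (l i + ((real N + 1) * (\<gamma> + 1) * r)\<^sup>2) * (r ^ i)\<^sup>2"
    by (simp add: distrib_right)
  have "\<forall>p\<in>{1..t}. \<gamma> * r ^ p \<noteq> 0 \<and> r ^ p \<noteq> 0" using assms(1,2) by simp
  from order_trans[OF OPT_columns_le[OF this assms(4)] tail] show ?thesis unfolding N_def .
qed

lemma Er_OPT_ratio_geometric:
  fixes \<gamma> r K \<delta> :: real
  assumes K: "coeff_sum_bound K" "0 < K"
    and \<delta>: "0 < \<delta>" "\<delta> < 1" and \<gamma>: "0 < \<gamma>" "K / \<gamma> \<le> \<delta> / 2"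
    and r: "0 < r" "(real (\<Sum>p\<in>{1..t}. l p) + 1) * (\<gamma> + 1) * r \<le> \<delta> / 2"
    and i: "i \<in> {1..t}" and S: "S \<subseteq> blocks" "card S = (\<Sum>p\<in>{1..i}. l p) - 1"
  shows "(1 - \<delta>) * l i \<le> Er (column (\<lambda>p. \<gamma> * r ^ p) (\<lambda>p. r ^ p)) blocks S /
    OPT (column (\<lambda>p. \<gamma> * r ^ p) (\<lambda>p. r ^ p)) blocks ((\<Sum>p\<in>{1..i}. l p) - 1)"
proof -
  define N where "N = (\<Sum>p\<in>{1..t}. l p)"
  let ?col = "column (\<lambda>p. \<gamma> * r ^ p) (\<lambda>p. r ^ p)" and ?k = "(\<Sum>p\<in>{1..i}. l p) - 1"
  have li: "1 \<le> l i" "l i \<le> (\<Sum>p\<in>{1..i}. l p)" "l i \<le> N"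
    using l_pos[OF i] i unfolding N_def by (auto intro: member_le_sum)
  have "(real N + 1) * r \<le> (real N + 1) * (\<gamma> + 1) * r" using \<gamma>(1) r(1) by simp
  then have r_N: "(real N + 1) * r \<le> \<delta> / 2" using r(2) unfolding N_def by linarith
  moreover have "r \<le> (real N + 1) * r" using r(1) by simp
  ultimately have r1: "r < 1" using \<delta>(2) by linarith
  have "r ^ p * K / (\<gamma> * r ^ p) = K / \<gamma>" for p using r(1) by simp
  then have tilt: "1 - (\<delta> / 2)\<^sup>2 \<le> 1 - (r ^ p * K / (\<gamma> * r ^ p))\<^sup>2" for p
    using K(2) \<gamma> by (simp add: power_mono)
  have pos: "\<forall>p\<in>{1..t}. 0 < \<gamma> * r ^ p \<and> 0 < r ^ p" using \<gamma>(1) r(1) by simp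
  have "card S < (\<Sum>p\<in>{1..i}. l p)" using S(2) li(1,2) by linarith
  then obtain i' where i': "i' \<in> {1..i}"
    and "(l i' * r ^ i')\<^sup>2 * (1 - (r ^ i' * K / (\<gamma> * r ^ i'))\<^sup>2) \<le> Er ?col blocks S"
    using Er_columns_ge[OF K(1) pos i S(1)] by blast
  then have Er: "(l i' * r ^ i')\<^sup>2 * (1 - (\<delta> / 2)\<^sup>2) \<le> Er ?col blocks S"
    using tilt[of i'] by (meson mult_left_mono order_trans zero_le_power2)
  have "0 \<le> (real N + 1) * (\<gamma> + 1) * r" using \<gamma>(1) r(1) by simp
  then have "((real N + 1) * (\<gamma> + 1) * r)\<^sup>2 \<le> (\<delta> / 2)\<^sup>2"
    using r(2) unfolding N_def by (intro power_mono)
  then have "(l i + ((real N + 1) * (\<gamma> + 1) * r)\<^sup>2) * (r ^ i)\<^sup>2 \<le> (l i + (\<delta> / 2)\<^sup>2) * (r ^ i)\<^sup>2"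
    by (intro mult_right_mono add_left_mono) auto
  then have "OPT ?col blocks ?k \<le> (l i + (\<delta> / 2)\<^sup>2) * (r ^ i)\<^sup>2"
    using OPT_geometric_columns_le[OF \<gamma>(1) r(1) r1 i] unfolding N_def by (rule order_trans[rotated])
  then have "(1 - \<delta>) * l i * OPT ?col blocks ?k \<le> (1 - \<delta>) * l i * ((l i + (\<delta> / 2)\<^sup>2) * (r ^ i)\<^sup>2)"
    using \<delta>(2) by (intro mult_left_mono) auto
  also have "\<dots> \<le> (l i' * r ^ i')\<^sup>2 * (1 - (\<delta> / 2)\<^sup>2)"
  proof (cases "i' = i")
    case True
    then show ?thesis using same_scale_bound[OF \<delta> li(1)] by simp
  next
    case False
    then have "r ^ i \<le> r * r ^ i'" using i' r(1) r1 by (simp flip: power_Suc add: power_decreasing)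
    then show ?thesis using smaller_scale_bound[OF \<delta> li(3) _ _ _ _ r_N] l_pos i i' r(1) by simp
  qed
  also note Er
  finally have "(1 - \<delta>) * l i * OPT ?col blocks ?k \<le> Er ?col blocks S" .
  moreover have "0 < OPT ?col blocks ?k" using \<gamma>(1) r(1) by (intro OPT_columns_pos[OF _ i]) simp
  ultimately show ?thesis by (simp add: pos_le_divide_eq)
qed

theorem ex_columns_Er_OPT_ratio_ge:
  fixes \<delta> :: real
  assumes "0 < \<delta>" "\<delta> < 1"
  shows "\<exists>\<alpha> \<beta> :: nat \<Rightarrow> real. (\<forall>i\<in>{1..t}. \<alpha> i > 0 \<and> \<beta> i > 0) \<and>
    (\<forall>i\<in>{1..t}. \<forall>S. S \<subseteq> blocks \<and> card S = (\<Sum>p\<in>{1..i}. l p) - 1 \<longrightarrow>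
      (1 - \<delta>) * l i \<le> Er (column \<alpha> \<beta>) blocks S / OPT (column \<alpha> \<beta>) blocks ((\<Sum>p\<in>{1..i}. l p) - 1))"
proof -
  obtain K where K: "K > 0" "coeff_sum_bound K" using ex_coeff_sum_bound by blast
  (* gamma = alpha_i / beta_i keeps the tilt K / gamma below delta / 2, and the ratio r of
     consecutive scales makes the blocks after i negligible for OPT *)
  define \<gamma> where "\<gamma> = 2 * K / \<delta>"
  define M where "M = (real (\<Sum>p\<in>{1..t}. l p) + 1) * (\<gamma> + 1)"
  define r where "r = \<delta> / (2 * M)"
  have \<gamma>: "0 < \<gamma>" "K / \<gamma> \<le> \<delta> / 2" using K(1) assms(1) by (simp_all add: \<gamma>_def)
  then have "M > 0" unfolding M_def by (intro mult_pos_pos add_nonneg_pos) (auto intro: sum_nonneg)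
  then have "0 < r" "M * r = \<delta> / 2" using assms(1) by (simp_all add: r_def)
  then have r: "0 < r" "(real (\<Sum>p\<in>{1..t}. l p) + 1) * (\<gamma> + 1) * r \<le> \<delta> / 2"
    unfolding M_def by simp_all
  show ?thesis
    using Er_OPT_ratio_geometric[OF K(2,1) assms \<gamma> r] \<gamma>(1) r(1)
    by (intro exI[of _ "\<lambda>p. \<gamma> * r ^ p"] exI[of _ "\<lambda>p. r ^ p"]) auto
qed

end

theorem lemma4:
  fixes \<delta> :: real and t :: nat and l :: "nat \<Rightarrow> nat"
    and a :: "nat \<Rightarrow> nat \<Rightarrow> real ^ 'm" and v :: "nat \<Rightarrow> real ^ 'm"
  assumes "0 < \<delta>" "\<delta> < 1" "t \<ge> 1"
    and "\<forall>i\<in>{1..t}. l i \<ge> 1"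
    and unit_a: "\<forall>i\<in>{1..t}. \<forall>j\<in>{1..l i}. norm (a i j) = 1"
    and gen_pos: "\<forall>i\<in>{1..t}. \<forall>J. J \<subset> {1..l i} \<longrightarrow>
        (\<forall>c. (\<Sum>j\<in>J. c j *\<^sub>R a i j) = 0 \<longrightarrow> (\<forall>j\<in>J. c j = 0))"
    and sum_zero: "\<forall>i\<in>{1..t}. (\<Sum>j\<in>{1..l i}. a i j) = 0"
    and orth_a: "\<forall>i\<in>{1..t}. \<forall>i'\<in>{1..t}. i \<noteq> i' \<longrightarrow>
        (\<forall>j\<in>{1..l i}. \<forall>j'\<in>{1..l i'}. a i j \<bullet> a i' j' = 0)"
    and unit_v: "\<forall>i\<in>{1..t}. norm (v i) = 1"
    and orth_v: "\<forall>i\<in>{1..t}. \<forall>i'\<in>{1..t}. i \<noteq> i' \<longrightarrow> v i \<bullet> v i' = 0"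
    and orth_va: "\<forall>i\<in>{1..t}. \<forall>i'\<in>{1..t}. \<forall>j\<in>{1..l i'}. v i \<bullet> a i' j = 0"
  shows "\<exists>\<alpha> \<beta> :: nat \<Rightarrow> real. (\<forall>i\<in>{1..t}. \<alpha> i > 0 \<and> \<beta> i > 0) \<and>
    (let C = (SIGMA i:{1..t}. {1..l i});
         col = (\<lambda>(i, j). \<alpha> i *\<^sub>R a i j + \<beta> i *\<^sub>R v i)
     in \<forall>i\<in>{1..t}. let k = (\<Sum>i'\<in>{1..i}. l i') - 1 in
        \<forall>S. S \<subseteq> C \<and> card S = k \<longrightarrow>
          Er col C S / OPT col C k \<ge> (1 - \<delta>) * real (l i))"
proof -
  interpret orthogonal_blocks t l a v
  proof
    show "1 \<le> l i" if "i \<in> {1..t}" for i using assms(4) that by blast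
    show "norm (a i j) = 1" if "i \<in> {1..t}" "j \<in> {1..l i}" for i j using unit_a that by blast
    show "indep_family (a i) J" if "i \<in> {1..t}" "J \<subset> {1..l i}" for i J
      using gen_pos that unfolding indep_family_def by blast
    show "(\<Sum>j\<in>{1..l i}. a i j) = 0" if "i \<in> {1..t}" for i using sum_zero that by blast
    show "a i j \<bullet> a i' j' = 0"
      if "i \<in> {1..t}" "i' \<in> {1..t}" "i \<noteq> i'" "j \<in> {1..l i}" "j' \<in> {1..l i'}" for i i' j j'
      using orth_a that by blast
    show "norm (v i) = 1" if "i \<in> {1..t}" for i using unit_v that by blast
    show "v i \<bullet> v i' = 0" if "i \<in> {1..t}" "i' \<in> {1..t}" "i \<noteq> i'" for i i' using orth_v that by blast
    show "v i \<bullet> a i' j = 0" if "i \<in> {1..t}" "i' \<in> {1..t}" "j \<in> {1..l i'}" for i i' j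
      using orth_va that by blast
  qed
  show ?thesis
    using ex_columns_Er_OPT_ratio_ge[OF assms(1,2)] unfolding Let_def column_def by simp
qed

end
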